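(* Let $G$ be a finite simple graph with $n$ vertices and $m$ edges. If $G$ is H--cordial, then $m-n$ is even.
   Context: A labeling of a graph $G$ is a map $f:E(G)\to\{-1,+1\}$. Given a labeling $f$, for each vertex $v$ define $f(v)=\sum_{e\in I(v)} f(e)$, where $I(v)$ is the set of edges incident to $v$. For an integer $c$, $e_f(c)$ denotes the number of edges $e$ with $f(e)=c$, and $v_f(c)$ denotes the number of vertices $v$ with $f(v)=c$. A labeling $f$ is H--cordial if there is a positive constant $K$ such that $|f(v)|=K$ for every vertex $v$, and $|e_f(1)-e_f(-1)|\le 1$ and $|v_f(K)-v_f(-K)|\le 1$. A graph is H--cordial if it admits an H--cordial labeling. *)

theory Defs
  imports Main
begin

definition simple_graph :: "'a set \<Rightarrow> 'a set set \<Rightarrow> bool" where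
  "simple_graph V E \<longleftrightarrow> finite V \<and> (\<forall>e\<in>E. e \<subseteq> V \<and> card e = 2)"

definition labeling :: "'a set set \<Rightarrow> ('a set \<Rightarrow> int) \<Rightarrow> bool" where
  "labeling E f \<longleftrightarrow> (\<forall>e\<in>E. f e = -1 \<or> f e = 1)"

definition vlabel :: "'a set set \<Rightarrow> ('a set \<Rightarrow> int) \<Rightarrow> 'a \<Rightarrow> int" where
  "vlabel E f v = (\<Sum>e\<in>{e\<in>E. v \<in> e}. f e)"

definition e_count :: "'a set set \<Rightarrow> ('a set \<Rightarrow> int) \<Rightarrow> int \<Rightarrow> nat" where
  "e_count E f c = card {e\<in>E. f e = c}"

definition v_count :: "'a set \<Rightarrow> 'a set set \<Rightarrow> ('a set \<Rightarrow> int) \<Rightarrow> int \<Rightarrow> nat" where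
  "v_count V E f c = card {v\<in>V. vlabel E f v = c}"

definition H_cordial_labeling :: "'a set \<Rightarrow> 'a set set \<Rightarrow> ('a set \<Rightarrow> int) \<Rightarrow> bool" where
  "H_cordial_labeling V E f \<longleftrightarrow> labeling E f \<and>
     (\<exists>K::int. K > 0 \<and> (\<forall>v\<in>V. \<bar>vlabel E f v\<bar> = K) \<and>
        \<bar>int (e_count E f 1) - int (e_count E f (-1))\<bar> \<le> 1 \<and>
        \<bar>int (v_count V E f K) - int (v_count V E f (-K))\<bar> \<le> 1)"

definition H_cordial :: "'a set \<Rightarrow> 'a set set \<Rightarrow> bool" where
  "H_cordial V E \<longleftrightarrow> (\<exists>f. H_cordial_labeling V E f)"

end

theory Submission
  imports Defs
begin

text \<open>Let \<open>p, q\<close> be the numbers of edges labelled \<open>1, -1\<close> and \<open>a, b\<close> the numbers of vertices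
  with value \<open>K, -K\<close>. Every edge contributes its label to both of its end vertices, so
  \<open>K (a - b) = 2 (p - q)\<close>; in particular \<open>a - b\<close> and \<open>p - q\<close> vanish together. Both differences
  lie in \<open>{-1, 0, 1}\<close> by cordiality, hence have the same parity, and so do \<open>m = p + q\<close> and
  \<open>n = a + b\<close>.\<close>

lemma simple_graph_finite_edges:
  assumes "simple_graph V E"
  shows "finite E"
proof (rule finite_subset)
  show "E \<subseteq> Pow V" using assms by (auto simp: simple_graph_def)
  show "finite (Pow V)" using assms by (simp add: simple_graph_def)
qed

lemma sum_vlabel_eq_twice_sum_labels:
  assumes "simple_graph V E"
  shows "(\<Sum>v\<in>V. vlabel E f v) = 2 * (\<Sum>e\<in>E. f e)"
proof -
  have fV: "finite V" using assms by (simp add: simple_graph_def)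
  have fE: "finite E" using assms by (rule simple_graph_finite_edges)
  have "(\<Sum>v\<in>V. vlabel E f v) = (\<Sum>v\<in>V. \<Sum>e\<in>E. if v \<in> e then f e else 0)"
    unfolding vlabel_def by (simp add: sum.inter_filter[OF fE])
  also have "\<dots> = (\<Sum>e\<in>E. \<Sum>v\<in>V. if v \<in> e then f e else 0)"
    by (rule sum.swap)
  also have "\<dots> = (\<Sum>e\<in>E. 2 * f e)"
  proof (rule sum.cong[OF refl])
    fix e assume "e \<in> E"
    then have "e \<subseteq> V" "card e = 2" using assms by (auto simp: simple_graph_def)
    have "(\<Sum>v\<in>V. if v \<in> e then f e else 0) = (\<Sum>v\<in>{v\<in>V. v \<in> e}. f e)"
      by (rule sum.inter_filter[OF fV, symmetric])
    also have "{v\<in>V. v \<in> e} = e" using \<open>e \<subseteq> V\<close> by auto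
    finally show "(\<Sum>v\<in>V. if v \<in> e then f e else 0) = 2 * f e" using \<open>card e = 2\<close> by simp
  qed
  finally show ?thesis by (simp add: sum_distrib_left)
qed

lemma
  fixes g :: "'a \<Rightarrow> int"
  assumes "finite A" and pm: "\<forall>x\<in>A. g x = c \<or> g x = - c" and "c \<noteq> 0"
  shows sum_pm_valued: "(\<Sum>x\<in>A. g x) = c * (int (card {x\<in>A. g x = c}) - int (card {x\<in>A. g x = - c}))"
    and card_pm_valued: "card A = card {x\<in>A. g x = c} + card {x\<in>A. g x = - c}"
proof -
  have A: "A = {x\<in>A. g x = c} \<union> {x\<in>A. g x = - c}" using pm by auto
  have disj: "{x\<in>A. g x = c} \<inter> {x\<in>A. g x = - c} = {}" using \<open>c \<noteq> 0\<close> by auto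
  have "(\<Sum>x\<in>A. g x) = (\<Sum>x\<in>{x\<in>A. g x = c}. g x) + (\<Sum>x\<in>{x\<in>A. g x = - c}. g x)"
    by (subst A, rule sum.union_disjoint) (use \<open>finite A\<close> disj in auto)
  also have "\<dots> = (\<Sum>x\<in>{x\<in>A. g x = c}. c) + (\<Sum>x\<in>{x\<in>A. g x = - c}. - c)"
    by (intro arg_cong2[where f = "(+)"] sum.cong) auto
  finally show "(\<Sum>x\<in>A. g x) = c * (int (card {x\<in>A. g x = c}) - int (card {x\<in>A. g x = - c}))"
    by (simp add: algebra_simps)
  show "card A = card {x\<in>A. g x = c} + card {x\<in>A. g x = - c}"
    by (subst A, rule card_Un_disjoint) (use \<open>finite A\<close> disj in auto)
qed

lemma even_iff_even_if_abs_le_one: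
  fixes x y :: int
  assumes "\<bar>x\<bar> \<le> 1" "\<bar>y\<bar> \<le> 1" "x = 0 \<longleftrightarrow> y = 0"
  shows "even x \<longleftrightarrow> even y"
  using assms by (auto simp: abs_le_iff)

theorem lemma2:
  fixes V :: "'a set" and E :: "'a set set"
  assumes "simple_graph V E"
    and "H_cordial V E"
  shows "even (int (card E) - int (card V))"
proof -
  obtain f K where lab: "labeling E f" and "K > 0" and K: "\<forall>v\<in>V. \<bar>vlabel E f v\<bar> = K"
    and ec: "\<bar>int (e_count E f 1) - int (e_count E f (-1))\<bar> \<le> 1"
    and vc: "\<bar>int (v_count V E f K) - int (v_count V E f (-K))\<bar> \<le> 1"
    using assms(2) unfolding H_cordial_def H_cordial_labeling_def by blast
  define p q a b where "p = int (e_count E f 1)" and "q = int (e_count E f (-1))"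
    and "a = int (v_count V E f K)" and "b = int (v_count V E f (-K))"
  have fE: "finite E" and fV: "finite V"
    using assms(1) simple_graph_finite_edges by (auto simp: simple_graph_def)
  have pm_E: "\<forall>e\<in>E. f e = 1 \<or> f e = - 1" using lab by (auto simp: labeling_def)
  have pm_V: "\<forall>v\<in>V. vlabel E f v = K \<or> vlabel E f v = - K" using K by auto
  have m: "int (card E) = p + q" and sum_E: "(\<Sum>e\<in>E. f e) = p - q"
    using card_pm_valued[OF fE pm_E] sum_pm_valued[OF fE pm_E]
    by (simp_all add: p_def q_def e_count_def)
  have n: "int (card V) = a + b" and sum_V: "(\<Sum>v\<in>V. vlabel E f v) = K * (a - b)"
    using card_pm_valued[OF fV pm_V] sum_pm_valued[OF fV pm_V] \<open>K > 0\<close>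
    by (simp_all add: a_def b_def v_count_def)
  have "K * (a - b) = 2 * (p - q)"
    using sum_vlabel_eq_twice_sum_labels[OF assms(1), of f] sum_E sum_V by simp
  then have "p - q = 0 \<longleftrightarrow> a - b = 0" using \<open>K > 0\<close> by auto
  moreover have "\<bar>p - q\<bar> \<le> 1" "\<bar>a - b\<bar> \<le> 1" using ec vc by (simp_all add: p_def q_def a_def b_def)
  ultimately have "even (p - q) \<longleftrightarrow> even (a - b)" by (intro even_iff_even_if_abs_le_one)
  then show ?thesis using m n by simp
qed

end
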